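(* Let $T$ be a decomposition tree of a distance-hereditary graph $G$, and let $v$ be an internal node of $T$ labeled $\oplus$ with left child $v_l$ and right child $v_r$, such that property (P) holds at $v_l$ and at $v_r$. Assume that $\hat\alpha(v_r)\le\hat\beta(v_l)$, and that neither ($\hat\alpha(v_l)=\hat\beta(v_r)=0$) nor ($\hat\alpha(v_r)=\hat\beta(v_l)=0$) holds. Then $\hat{min}(v)=\hat{min}(v_l)+\hat{min}(v_r)$.
   Context: All graphs are finite, simple, undirected. For a graph $H$ and $S\subseteq V(H)$, $N_H[S]$ is $S$ together with all vertices adjacent to a vertex of $S$, and $H[S]$ is the induced subgraph. Graphs carry a "twin set": a single-vertex graph on $x$ has twin set $\{x\}$. For vertex-disjoint graphs $G_l,G_r$ with twin sets $TS(G_l),TS(G_r)$: the true twin operation $G_l\otimes G_r$ has vertex set $V(G_l)\cup V(G_r)$, edge set $E(G_l)\cup E(G_r)\cup\{uw: u\in TS(G_l), w\in TS(G_r)\}$ and twin set $TS(G_l)\cup TS(G_r)$; the false twin operation $G_l\odot G_r$ has vertex set $V(G_l)\cup V(G_r)$, edge set $E(G_l)\cup E(G_r)$, twin set $TS(G_l)\cup TS(G_r)$; the attachment operation $G_l\oplus G_r$ has the same vertex and edge sets as $G_l\otimes G_r$ and twin set $TS(G_l)$. A decomposition tree $T$ of $G$ is a rooted binary tree whose leaves are in bijection with $V(G)$, each internal node having a left and a right child and a label in $\{\otimes,\odot,\oplus\}$; for each node $v$ define $\hat G(v)$ and $\hat{TS}(v)$ recursively: for a leaf $x$, the single-vertex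 graph on $x$ with twin set $\{x\}$; for an internal node $v$ with label $\circ$ and children $v_l,v_r$, $\hat G(v)=\hat G(v_l)\circ\hat G(v_r)$ with the corresponding twin set; one requires $\hat G(\text{root})=G$. Then $\hat G(v)$ is the subgraph of $G$ induced by the set $\hat V(v)$ of leaves below $v$. For a node $u$ and $0\le k\le|\hat{TS}(u)|$, call $S\subseteq\hat V(u)$ $k$-feasible if $\hat V(u)\setminus\hat{TS}(u)\subseteq N_{\hat G(u)}[S]$ and there is $X\subseteq S\cap\hat{TS}(u)$ with $|X|=k$ such that $\hat G(u)[S\setminus X]$ has a perfect matching. $\hat\gamma_k(u)$ is the minimum size of a $k$-feasible set. $\hat{min}(u)=\min\{\hat\gamma_k(u):0\le k\le|\hat{TS}(u)|\}$, and $\hat\alpha(u)$, $\hat\beta(u)$ are the smallest and the largest $k$ with $\hat\gamma_k(u)=\hat{min}(u)$. Property (P) holds at $u$ if for every $0\le k\le|\hat{TS}(u)|$: $\hat\gamma_k(u)=\hat{min}(u)+\hat\alpha(u)-k$ when $k\le\hat\alpha(u)$; $\hat\gamma_k(u)=\hat{min}(u)+k-\hat\beta(u)$ when $k\ge\hat\beta(u)$; $\hat\gamma_k(u)=\hat{min}(u)$ when $\hat\alpha(u)<k<\hat\beta(u)$ and $k-\hat\alpha(u)$ is even; and $\hat\gamma_k(u)=\hat{min}(u)+1$ otherwise. *)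

theory Defs
  imports Main
begin

definition simple_graph :: "'a set \<Rightarrow> 'a set set \<Rightarrow> bool" where
  "simple_graph V E \<longleftrightarrow> finite V \<and> (\<forall>e\<in>E. e \<subseteq> V \<and> card e = 2)"

definition walk :: "'a set \<Rightarrow> 'a set set \<Rightarrow> 'a list \<Rightarrow> bool" where
  "walk V E p \<longleftrightarrow> p \<noteq> [] \<and> set p \<subseteq> V \<and>
     (\<forall>i. Suc i < length p \<longrightarrow> {p ! i, p ! Suc i} \<in> E)"

definition connected_graph :: "'a set \<Rightarrow> 'a set set \<Rightarrow> bool" where
  "connected_graph V E \<longleftrightarrow>
     (\<forall>u\<in>V. \<forall>w\<in>V. \<exists>p. walk V E p \<and> hd p = u \<and> last p = w)"

definition gdist :: "'a set \<Rightarrow> 'a set set \<Rightarrow> 'a \<Rightarrow> 'a \<Rightarrow> nat" where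
  "gdist V E u w = (LEAST n. \<exists>p. walk V E p \<and> hd p = u \<and> last p = w \<and> length p = Suc n)"

definition induced_edges :: "'a set set \<Rightarrow> 'a set \<Rightarrow> 'a set set" where
  "induced_edges E S = {e \<in> E. e \<subseteq> S}"

definition distance_hereditary :: "'a set \<Rightarrow> 'a set set \<Rightarrow> bool" where
  "distance_hereditary V E \<longleftrightarrow> simple_graph V E \<and>
     (\<forall>S\<subseteq>V. connected_graph S (induced_edges E S) \<longrightarrow>
        (\<forall>u\<in>S. \<forall>w\<in>S. gdist S (induced_edges E S) u w = gdist V E u w))"

definition closed_nbh :: "'a set set \<Rightarrow> 'a set \<Rightarrow> 'a set" where
  "closed_nbh E S = S \<union> {w. \<exists>u\<in>S. {u, w} \<in> E}"

definition perfect_matching :: "'a set set \<Rightarrow> 'a set \<Rightarrow> 'a set set \<Rightarrow> bool" where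
  "perfect_matching E W M \<longleftrightarrow> M \<subseteq> E \<and> (\<forall>e\<in>M. e \<subseteq> W) \<and>
     (\<forall>e\<in>M. \<forall>e'\<in>M. e \<noteq> e' \<longrightarrow> e \<inter> e' = {}) \<and> \<Union>M = W"

datatype op = TrueTwin | FalseTwin | Attach

datatype 'a dtree = Leaf 'a | Node op "'a dtree" "'a dtree"

fun hatV :: "'a dtree \<Rightarrow> 'a set" where
  "hatV (Leaf x) = {x}"
| "hatV (Node _ l r) = hatV l \<union> hatV r"

fun hatTS :: "'a dtree \<Rightarrow> 'a set" where
  "hatTS (Leaf x) = {x}"
| "hatTS (Node TrueTwin l r) = hatTS l \<union> hatTS r"
| "hatTS (Node FalseTwin l r) = hatTS l \<union> hatTS r"
| "hatTS (Node Attach l r) = hatTS l"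

fun hatE :: "'a dtree \<Rightarrow> 'a set set" where
  "hatE (Leaf x) = {}"
| "hatE (Node TrueTwin l r) =
     hatE l \<union> hatE r \<union> {{u, w} | u w. u \<in> hatTS l \<and> w \<in> hatTS r}"
| "hatE (Node FalseTwin l r) = hatE l \<union> hatE r"
| "hatE (Node Attach l r) =
     hatE l \<union> hatE r \<union> {{u, w} | u w. u \<in> hatTS l \<and> w \<in> hatTS r}"

text \<open>Leaves are in bijection with the vertices: children have disjoint leaf sets.\<close>
fun wf_dtree :: "'a dtree \<Rightarrow> bool" where
  "wf_dtree (Leaf x) = True"
| "wf_dtree (Node _ l r) = (wf_dtree l \<and> wf_dtree r \<and> hatV l \<inter> hatV r = {})"

definition decomposition_tree :: "'a dtree \<Rightarrow> 'a set \<Rightarrow> 'a set set \<Rightarrow> bool" where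
  "decomposition_tree T V E \<longleftrightarrow> wf_dtree T \<and> hatV T = V \<and> hatE T = E"

fun subtrees :: "'a dtree \<Rightarrow> 'a dtree set" where
  "subtrees (Leaf x) = {Leaf x}"
| "subtrees (Node c l r) = insert (Node c l r) (subtrees l \<union> subtrees r)"

definition k_feasible :: "'a dtree \<Rightarrow> nat \<Rightarrow> 'a set \<Rightarrow> bool" where
  "k_feasible u k S \<longleftrightarrow> S \<subseteq> hatV u \<and>
     hatV u - hatTS u \<subseteq> closed_nbh (hatE u) S \<and>
     (\<exists>X. X \<subseteq> S \<inter> hatTS u \<and> card X = k \<and>
        (\<exists>M. perfect_matching (hatE u) (S - X) M))"

definition gamma_hat :: "'a dtree \<Rightarrow> nat \<Rightarrow> nat" where
  "gamma_hat u k = (LEAST n. \<exists>S. k_feasible u k S \<and> card S = n)"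

definition min_hat :: "'a dtree \<Rightarrow> nat" where
  "min_hat u = Min {gamma_hat u k | k. k \<le> card (hatTS u)}"

definition alpha_hat :: "'a dtree \<Rightarrow> nat" where
  "alpha_hat u = Min {k. k \<le> card (hatTS u) \<and> gamma_hat u k = min_hat u}"

definition beta_hat :: "'a dtree \<Rightarrow> nat" where
  "beta_hat u = Max {k. k \<le> card (hatTS u) \<and> gamma_hat u k = min_hat u}"

definition property_P :: "'a dtree \<Rightarrow> bool" where
  "property_P u \<longleftrightarrow> (\<forall>k \<le> card (hatTS u).
     (k \<le> alpha_hat u \<longrightarrow> gamma_hat u k = min_hat u + alpha_hat u - k) \<and>
     (beta_hat u \<le> k \<longrightarrow> gamma_hat u k = min_hat u + k - beta_hat u) \<and>
     (alpha_hat u < k \<and> k < beta_hat u \<longrightarrow>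
        gamma_hat u k = (if even (k - alpha_hat u) then min_hat u else min_hat u + 1)))"

end

theory Submission
  imports Defs
begin

(* Split a k-feasible set S of u = l \<oplus> r along V(l) and V(r). The matching edges of S that
   cross between the children join c twins of l to c twins of r; deleting them leaves
   S \<inter> V(l) (k + c)-feasible for l and S \<inter> V(r) c-feasible for r, because non-twin vertices
   have no neighbours across. Hence min(u) \<ge> min(l) + min(r).
   Conversely, take a beta(l)-feasible set of l of size min(l) and an alpha(r)-feasible set of r
   of size min(r). Matching alpha(r) of the beta(l) unmatched twins of l to the alpha(r) unmatched
   twins of r gives a (beta(l) - alpha(r))-feasible set of u, in which the twin set of r is
   dominated by any of the beta(l) \<ge> 1 unmatched twins of l. Hence min(u) \<le> min(l) + min(r). *)

lemma finite_hatV: "finite (hatV u)"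
  by (induction u) auto

lemma wf_dtree_subtrees: "t \<in> subtrees T \<Longrightarrow> wf_dtree T \<Longrightarrow> wf_dtree t"
  by (induction T rule: subtrees.induct) auto

lemma hatTS_subset_hatV: "hatTS u \<subseteq> hatV u"
  by (induction u rule: hatTS.induct) auto

lemma finite_hatTS: "finite (hatTS u)"
  using finite_subset[OF hatTS_subset_hatV finite_hatV] .

lemma card_hatTS_pos: "0 < card (hatTS u)"
  by (induction u rule: hatTS.induct) (auto simp: card_gt_0_iff finite_hatTS)

lemma card_Un_children:
  assumes "wf_dtree (Node c l r)" "A \<subseteq> hatV l" "B \<subseteq> hatV r"
  shows "card (A \<union> B) = card A + card B"
proof (rule card_Un_disjoint)
  show "finite A" "finite B" using assms(2,3) finite_subset finite_hatV by blast+
  show "A \<inter> B = {}" using assms by auto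
qed

lemma hatTS_Node_subset: "hatTS (Node c l r) \<subseteq> hatTS l \<union> hatTS r"
  by (cases c) auto

lemma hatE_subset_hatV: "e \<in> hatE u \<Longrightarrow> e \<subseteq> hatV u"
  by (induction u arbitrary: e rule: hatE.induct) (auto dest: subsetD[OF hatTS_subset_hatV])

lemma hatE_nonempty: "e \<in> hatE u \<Longrightarrow> e \<noteq> {}"
  by (induction u arbitrary: e rule: hatE.induct) auto

lemma finite_hatE: "finite (hatE u)"
  by (rule finite_subset[of _ "Pow (hatV u)"]) (auto dest: hatE_subset_hatV simp: finite_hatV)

lemma hatE_children_subset: "hatE l \<union> hatE r \<subseteq> hatE (Node c l r)"
  by (cases c) auto

lemma hatE_Node_cases:
  "e \<in> hatE (Node c l r) \<Longrightarrow>
     e \<in> hatE l \<or> e \<in> hatE r \<or> (\<exists>a\<in>hatTS l. \<exists>b\<in>hatTS r. e = {a, b})"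
  by (cases c) auto

lemma hatE_Node_crossing:
  assumes "e \<in> hatE (Node c l r)" "\<not> e \<subseteq> hatV l" "\<not> e \<subseteq> hatV r"
  shows "\<exists>a\<in>hatTS l. \<exists>b\<in>hatTS r. e = {a, b}"
  using assms hatE_subset_hatV[of e l] hatE_subset_hatV[of e r] by (cases c) auto

lemma hatE_Node_inside_child:
  assumes "wf_dtree (Node c l r)" "t \<in> {l, r}" "e \<in> hatE (Node c l r)" "e \<subseteq> hatV t"
  shows "e \<in> hatE t"
proof -
  have D: "hatV l \<inter> hatV r = {}" using assms(1) by simp
  have "\<not> (\<exists>a\<in>hatTS l. \<exists>b\<in>hatTS r. e = {a, b})"
    using assms(2,4) D hatTS_subset_hatV[of l] hatTS_subset_hatV[of r] by blast
  then have "e \<in> hatE l \<or> e \<in> hatE r" using hatE_Node_cases[OF assms(3)] by blast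
  then show ?thesis
    using assms(2,4) D hatE_subset_hatV[of e l] hatE_subset_hatV[of e r] hatE_nonempty[of e] by blast
qed

lemma hatE_Node_at_non_twin:
  assumes "wf_dtree (Node c l r)" "t \<in> {l, r}" "{w, x} \<in> hatE (Node c l r)" "x \<in> hatV t - hatTS t"
  shows "{w, x} \<in> hatE t"
proof -
  have D: "hatV l \<inter> hatV r = {}" using assms(1) by simp
  have "x \<notin> hatTS l \<union> hatTS r"
    using assms(2,4) D hatTS_subset_hatV[of l] hatTS_subset_hatV[of r] by blast
  then have "\<not> (\<exists>a\<in>hatTS l. \<exists>b\<in>hatTS r. {w, x} = {a, b})"
    by (auto simp: doubleton_eq_iff)
  then have "{w, x} \<in> hatE l \<or> {w, x} \<in> hatE r" using hatE_Node_cases[OF assms(3)] by blast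
  then show ?thesis
    using assms(2,4) D hatE_subset_hatV[of "{w, x}" l] hatE_subset_hatV[of "{w, x}" r] by blast
qed

lemma closed_nbh_mono: "E \<subseteq> E' \<Longrightarrow> S \<subseteq> S' \<Longrightarrow> closed_nbh E S \<subseteq> closed_nbh E' S'"
  unfolding closed_nbh_def by blast

lemma closed_nbh_Node_child:
  assumes "wf_dtree (Node c l r)" "t \<in> {l, r}" "x \<in> hatV t - hatTS t"
    and "x \<in> closed_nbh (hatE (Node c l r)) S"
  shows "x \<in> closed_nbh (hatE t) (S \<inter> hatV t)"
proof -
  have "x \<in> S \<or> (\<exists>w\<in>S. {w, x} \<in> hatE (Node c l r))"
    using assms(4) unfolding closed_nbh_def by blast
  then show ?thesis
  proof
    assume "\<exists>w\<in>S. {w, x} \<in> hatE (Node c l r)"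
    then obtain w where "w \<in> S" "{w, x} \<in> hatE t"
      using hatE_Node_at_non_twin[OF assms(1,2) _ assms(3)] by blast
    moreover from this have "w \<in> hatV t" using hatE_subset_hatV by blast
    ultimately show ?thesis unfolding closed_nbh_def by blast
  qed (use assms(3) in \<open>auto simp: closed_nbh_def\<close>)
qed

lemma perfect_matching_mono:
  "perfect_matching E W M \<Longrightarrow> E \<subseteq> E' \<Longrightarrow> perfect_matching E' W M"
  unfolding perfect_matching_def by blast

lemma perfect_matching_Un:
  assumes "perfect_matching E W M" "perfect_matching E W' M'" "W \<inter> W' = {}"
  shows "perfect_matching E (W \<union> W') (M \<union> M')"
proof -
  have cross: "e \<inter> e' = {}" if "e \<in> M" "e' \<in> M'" for e e'
    using that assms unfolding perfect_matching_def by blast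
  show ?thesis
    using assms(1,2) unfolding perfect_matching_def
  proof (elim conjE, intro conjI)
    assume "\<forall>e\<in>M. \<forall>e'\<in>M. e \<noteq> e' \<longrightarrow> e \<inter> e' = {}" "\<forall>e\<in>M'. \<forall>e'\<in>M'. e \<noteq> e' \<longrightarrow> e \<inter> e' = {}"
    then show "\<forall>e\<in>M \<union> M'. \<forall>e'\<in>M \<union> M'. e \<noteq> e' \<longrightarrow> e \<inter> e' = {}"
      using cross by (metis Int_commute Un_iff)
  qed auto
qed

lemma perfect_matching_bij_betw:
  assumes "bij_betw g A B" "A \<inter> B = {}" "\<And>a. a \<in> A \<Longrightarrow> {a, g a} \<in> E"
  shows "perfect_matching E (A \<union> B) ((\<lambda>a. {a, g a}) ` A)"
proof -
  have gA: "g ` A = B" and inj: "inj_on g A" using assms(1) by (auto simp: bij_betw_def)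
  have disj: "{a, g a} \<inter> {a', g a'} = {}" if "a \<in> A" "a' \<in> A" "a \<noteq> a'" for a a'
  proof -
    have "g a \<noteq> g a'" using inj that by (auto dest: inj_onD)
    moreover have "g a \<in> B" "g a' \<in> B" using that gA by auto
    ultimately show ?thesis using that assms(2) by auto
  qed
  have "\<forall>e\<in>(\<lambda>a. {a, g a}) ` A. \<forall>e'\<in>(\<lambda>a. {a, g a}) ` A. e \<noteq> e' \<longrightarrow> e \<inter> e' = {}"
  proof (intro ballI impI)
    fix e e' assume "e \<in> (\<lambda>a. {a, g a}) ` A" "e' \<in> (\<lambda>a. {a, g a}) ` A" "e \<noteq> e'"
    then obtain a a' where "a \<in> A" "a' \<in> A" "a \<noteq> a'" "e = {a, g a}" "e' = {a', g a'}" by blast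
    then show "e \<inter> e' = {}" using disj by simp
  qed
  moreover have "\<Union>((\<lambda>a. {a, g a}) ` A) = A \<union> B" using gA by auto
  ultimately show ?thesis
    using assms(3) gA unfolding perfect_matching_def by auto
qed

lemma perfect_matching_restrict:
  assumes "perfect_matching E W M" "\<And>e. e \<in> M \<Longrightarrow> e \<subseteq> A \<Longrightarrow> e \<in> E'"
  shows "perfect_matching E' (W \<inter> A - \<Union>{e \<in> M. \<not> e \<subseteq> A}) {e \<in> M. e \<subseteq> A}"
proof -
  have M: "\<forall>e\<in>M. e \<subseteq> W" "\<forall>e\<in>M. \<forall>e'\<in>M. e \<noteq> e' \<longrightarrow> e \<inter> e' = {}" "\<Union>M = W"
    using assms(1) unfolding perfect_matching_def by auto
  have cover: "\<Union>{e \<in> M. e \<subseteq> A} = W \<inter> A - \<Union>{e \<in> M. \<not> e \<subseteq> A}"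
  proof (intro equalityI subsetI)
    fix x assume "x \<in> \<Union>{e \<in> M. e \<subseteq> A}"
    then obtain e where e: "e \<in> M" "e \<subseteq> A" "x \<in> e" by blast
    have "x \<notin> e'" if "e' \<in> M" "\<not> e' \<subseteq> A" for e'
      using M(2) e that by blast
    then show "x \<in> W \<inter> A - \<Union>{e \<in> M. \<not> e \<subseteq> A}" using M(1) e by blast
  next
    fix x assume "x \<in> W \<inter> A - \<Union>{e \<in> M. \<not> e \<subseteq> A}"
    then show "x \<in> \<Union>{e \<in> M. e \<subseteq> A}" using M(3) by blast
  qed
  show ?thesis
    unfolding perfect_matching_def
  proof (intro conjI)
    show "\<forall>e\<in>{e \<in> M. e \<subseteq> A}. \<forall>e'\<in>{e \<in> M. e \<subseteq> A}. e \<noteq> e' \<longrightarrow> e \<inter> e' = {}"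
      using M(2) by blast
  qed (use assms(2) cover in blast)+
qed

lemma card_Int_Union_disjoint:
  assumes "finite M" "\<And>e e'. e \<in> M \<Longrightarrow> e' \<in> M \<Longrightarrow> e \<noteq> e' \<Longrightarrow> e \<inter> e' = {}"
    and "\<And>e. e \<in> M \<Longrightarrow> card (A \<inter> e) = 1"
  shows "card (A \<inter> \<Union>M) = card M"
proof -
  have "card (A \<inter> \<Union>M) = card (\<Union>e\<in>M. A \<inter> e)" by (simp only: Int_Union)
  also have "\<dots> = (\<Sum>e\<in>M. card (A \<inter> e))"
  proof (rule card_UN_disjoint)
    show "\<forall>e\<in>M. finite (A \<inter> e)" using assms(3) by (metis card.infinite zero_neq_one)
    show "\<forall>e\<in>M. \<forall>e'\<in>M. e \<noteq> e' \<longrightarrow> A \<inter> e \<inter> (A \<inter> e') = {}" using assms(2) by auto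
  qed (rule assms(1))
  also have "\<dots> = (\<Sum>e\<in>M. 1)" using assms(3) by (rule sum.cong[OF refl])
  also have "\<dots> = card M" by simp
  finally show ?thesis .
qed

lemma k_feasibleI:
  assumes "S \<subseteq> hatV u" "hatV u - hatTS u \<subseteq> closed_nbh (hatE u) S"
    and "X \<subseteq> S \<inter> hatTS u" "card X = k" "perfect_matching (hatE u) (S - X) M"
  shows "k_feasible u k S"
  using assms unfolding k_feasible_def by blast

lemma k_feasibleE:
  assumes "k_feasible u k S"
  obtains X M where "S \<subseteq> hatV u" "hatV u - hatTS u \<subseteq> closed_nbh (hatE u) S"
    "X \<subseteq> S \<inter> hatTS u" "card X = k" "perfect_matching (hatE u) (S - X) M"
  using assms unfolding k_feasible_def by blast

lemma k_feasible_le_card_hatTS: "k_feasible u k S \<Longrightarrow> k \<le> card (hatTS u)"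
  by (elim k_feasibleE) (metis card_mono finite_hatTS le_infE)

lemma k_feasible_Leaf: "k \<le> 1 \<Longrightarrow> k_feasible (Leaf x) k (if k = 0 then {} else {x})"
  by (rule k_feasibleI[where X = "if k = 0 then {} else {x}" and M = "{}"])
    (auto simp: perfect_matching_def)

lemma closed_nbh_Node_Un:
  assumes "k_feasible l j Sl" "k_feasible r i Sr"
  shows "(hatV l - hatTS l) \<union> (hatV r - hatTS r) \<subseteq> closed_nbh (hatE (Node c l r)) (Sl \<union> Sr)"
proof -
  have "hatV l - hatTS l \<subseteq> closed_nbh (hatE l) Sl" "hatV r - hatTS r \<subseteq> closed_nbh (hatE r) Sr"
    using assms by (auto elim: k_feasibleE)
  moreover have "closed_nbh (hatE l) Sl \<union> closed_nbh (hatE r) Sr \<subseteq> closed_nbh (hatE (Node c l r)) (Sl \<union> Sr)"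
    using hatE_children_subset[of l r c] by (intro Un_least closed_nbh_mono) auto
  ultimately show ?thesis by blast
qed

lemma k_feasible_twin_Un:
  assumes "wf_dtree (Node c l r)" "c \<noteq> Attach" "k_feasible l i Sl" "k_feasible r j Sr"
  shows "k_feasible (Node c l r) (i + j) (Sl \<union> Sr)"
proof -
  let ?u = "Node c l r"
  obtain Xl Ml where l: "Sl \<subseteq> hatV l" "Xl \<subseteq> Sl \<inter> hatTS l" "card Xl = i"
      "perfect_matching (hatE l) (Sl - Xl) Ml"
    using assms(3) by (elim k_feasibleE)
  obtain Xr Mr where r: "Sr \<subseteq> hatV r" "Xr \<subseteq> Sr \<inter> hatTS r" "card Xr = j"
      "perfect_matching (hatE r) (Sr - Xr) Mr"
    using assms(4) by (elim k_feasibleE)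
  have D: "hatV l \<inter> hatV r = {}" using assms(1) by simp
  have TS: "hatTS ?u = hatTS l \<union> hatTS r" using assms(2) by (cases c) auto
  have "card (Xl \<union> Xr) = i + j"
  proof -
    have "Xl \<subseteq> hatV l" "Xr \<subseteq> hatV r" using l(1,2) r(1,2) by blast+
    then have "finite Xl" "finite Xr" using finite_subset finite_hatV by blast+
    moreover have "Xl \<inter> Xr = {}" using l(1,2) r(1,2) D by blast
    ultimately show ?thesis using l(3) r(3) by (simp add: card_Un_disjoint)
  qed
  moreover have "perfect_matching (hatE ?u) ((Sl - Xl) \<union> (Sr - Xr)) (Ml \<union> Mr)"
  proof (rule perfect_matching_Un)
    show "perfect_matching (hatE ?u) (Sl - Xl) Ml" "perfect_matching (hatE ?u) (Sr - Xr) Mr"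
      using perfect_matching_mono[OF l(4)] perfect_matching_mono[OF r(4)] hatE_children_subset[of l r c]
      by blast+
    show "(Sl - Xl) \<inter> (Sr - Xr) = {}" using l(1) r(1) D by blast
  qed
  moreover have "(Sl \<union> Sr) - (Xl \<union> Xr) = (Sl - Xl) \<union> (Sr - Xr)" using l(1,2) r(1,2) D by blast
  moreover have "hatV ?u - hatTS ?u \<subseteq> closed_nbh (hatE ?u) (Sl \<union> Sr)"
    using closed_nbh_Node_Un[OF assms(3,4)] TS by auto
  moreover have "Sl \<union> Sr \<subseteq> hatV ?u" "Xl \<union> Xr \<subseteq> (Sl \<union> Sr) \<inter> hatTS ?u"
    using l(1,2) r(1,2) TS by auto
  ultimately show ?thesis by (metis k_feasibleI)
qed

lemma k_feasible_Attach_Un: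
  assumes "wf_dtree (Node Attach l r)" "k_feasible l j Sl" "k_feasible r i Sr" "i \<le> j" "0 < j"
  shows "k_feasible (Node Attach l r) (j - i) (Sl \<union> Sr)"
proof -
  let ?u = "Node Attach l r"
  obtain Z Ml where l: "Sl \<subseteq> hatV l" "Z \<subseteq> Sl \<inter> hatTS l" "card Z = j"
      "perfect_matching (hatE l) (Sl - Z) Ml"
    using assms(2) by (elim k_feasibleE)
  obtain Yr Mr where r: "Sr \<subseteq> hatV r" "Yr \<subseteq> Sr \<inter> hatTS r" "card Yr = i"
      "perfect_matching (hatE r) (Sr - Yr) Mr"
    using assms(3) by (elim k_feasibleE)
  have D: "hatV l \<inter> hatV r = {}" using assms(1) by simp
  have "finite Z" "finite Yr"
    using l(1,2) r(1,2) finite_subset[of _ "hatV _"] finite_hatV by (meson le_infE subset_trans)+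
  obtain Yl where Yl: "Yl \<subseteq> Z" "card Yl = i" "finite Yl"
    using obtain_subset_with_card_n[of i Z] assms(4) l(3) by metis
  obtain g where g: "bij_betw g Yl Yr"
    using finite_same_card_bij[OF \<open>finite Yl\<close> \<open>finite Yr\<close>] Yl(2) r(3) by metis
  have "perfect_matching (hatE ?u) (Yl \<union> Yr) ((\<lambda>a. {a, g a}) ` Yl)"
  proof (rule perfect_matching_bij_betw[OF g])
    show "Yl \<inter> Yr = {}" using Yl(1) l(1,2) r(1,2) D by blast
    show "{a, g a} \<in> hatE ?u" if "a \<in> Yl" for a
    proof -
      have "a \<in> hatTS l" "g a \<in> hatTS r"
        using that Yl(1) l(2) r(2) bij_betwE[OF g] by blast+
      then show ?thesis by auto
    qed
  qed
  moreover have "perfect_matching (hatE ?u) (Sl - Z) Ml" "perfect_matching (hatE ?u) (Sr - Yr) Mr"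
    using perfect_matching_mono[OF l(4)] perfect_matching_mono[OF r(4)] hatE_children_subset[of l r Attach]
    by blast+
  ultimately have "perfect_matching (hatE ?u) ((Sl - Z) \<union> (Sr - Yr) \<union> (Yl \<union> Yr))
      (Ml \<union> Mr \<union> (\<lambda>a. {a, g a}) ` Yl)"
    using l(1,2) r(1,2) Yl(1) D by (intro perfect_matching_Un) blast+
  moreover have "(Sl \<union> Sr) - (Z - Yl) = (Sl - Z) \<union> (Sr - Yr) \<union> (Yl \<union> Yr)"
    using l(1,2) r(1,2) Yl(1) D by blast
  moreover have "card (Z - Yl) = j - i"
    using l(3) Yl by (simp add: card_Diff_subset)
  moreover have "hatV ?u - hatTS ?u \<subseteq> closed_nbh (hatE ?u) (Sl \<union> Sr)"
  proof -
    obtain z where z: "z \<in> Z" using l(3) assms(5) by fastforce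
    have "hatTS r \<subseteq> closed_nbh (hatE ?u) (Sl \<union> Sr)"
    proof
      fix w assume "w \<in> hatTS r"
      then have "{z, w} \<in> hatE ?u" using z l(2) by auto
      then show "w \<in> closed_nbh (hatE ?u) (Sl \<union> Sr)"
        using z l(2) unfolding closed_nbh_def by blast
    qed
    then show ?thesis using closed_nbh_Node_Un[OF assms(2,3), of Attach] by auto
  qed
  moreover have "Sl \<union> Sr \<subseteq> hatV ?u" "Z - Yl \<subseteq> (Sl \<union> Sr) \<inter> hatTS ?u"
    using l(1,2) r(1) by auto
  ultimately show ?thesis by (metis k_feasibleI)
qed

lemma card_hatTS_twin:
  assumes "wf_dtree (Node c l r)" "c \<noteq> Attach"
  shows "card (hatTS (Node c l r)) = card (hatTS l) + card (hatTS r)"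
proof -
  have "hatTS l \<inter> hatTS r = {}"
    using assms(1) hatTS_subset_hatV[of l] hatTS_subset_hatV[of r] by auto
  then show ?thesis using assms(2) by (cases c) (auto simp: card_Un_disjoint finite_hatTS)
qed

lemma k_feasible_exists: "wf_dtree u \<Longrightarrow> k \<le> card (hatTS u) \<Longrightarrow> \<exists>S. k_feasible u k S"
proof (induction u arbitrary: k)
  case (Leaf x)
  then show ?case using k_feasible_Leaf[of k x] by auto
next
  case (Node c l r)
  have wf: "wf_dtree (Node c l r)" "wf_dtree l" "wf_dtree r" using Node.prems(1) by auto
  show ?case
  proof (cases "c = Attach")
    case True
    \<comment> \<open>For k = 0 a 1-feasible set of l and a 1-feasible set of r are glued along a
       crossing edge.\<close>
    define j where "j = max k 1"
    have "j \<le> card (hatTS l)" "j - k \<le> card (hatTS r)"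
      using Node.prems(2) True card_hatTS_pos[of l] card_hatTS_pos[of r] by (auto simp: j_def)
    then obtain Sl Sr where "k_feasible l j Sl" "k_feasible r (j - k) Sr"
      using Node.IH wf(2,3) by blast
    moreover have "j - k \<le> j" "0 < j" by (auto simp: j_def)
    ultimately have "k_feasible (Node c l r) (j - (j - k)) (Sl \<union> Sr)"
      using k_feasible_Attach_Un wf(1) True by blast
    moreover have "j - (j - k) = k" by (simp add: j_def)
    ultimately show ?thesis by auto
  next
    case False
    define i where "i = min k (card (hatTS l))"
    have "i \<le> card (hatTS l)" "k - i \<le> card (hatTS r)"
      using Node.prems(2) card_hatTS_twin[OF wf(1) False] by (auto simp: i_def)
    then obtain Sl Sr where "k_feasible l i Sl" "k_feasible r (k - i) Sr"
      using Node.IH wf(2,3) by blast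
    then have "k_feasible (Node c l r) (i + (k - i)) (Sl \<union> Sr)"
      using k_feasible_twin_Un[OF wf(1) False] by blast
    then show ?thesis by (auto simp: i_def)
  qed
qed

definition crossing_edges :: "'a dtree \<Rightarrow> 'a dtree \<Rightarrow> 'a set set \<Rightarrow> 'a set set" where
  "crossing_edges l r M = {e \<in> M. \<not> e \<subseteq> hatV l \<and> \<not> e \<subseteq> hatV r}"

lemma hatV_Int_crossing_edge:
  assumes "wf_dtree (Node c l r)" "t \<in> {l, r}" "M \<subseteq> hatE (Node c l r)" "e \<in> crossing_edges l r M"
  shows "\<exists>a\<in>hatTS t. hatV t \<inter> e = {a}"
proof -
  have D: "hatV l \<inter> hatV r = {}" using assms(1) by simp
  obtain a b where ab: "a \<in> hatTS l" "b \<in> hatTS r" "e = {a, b}"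
    using hatE_Node_crossing[of e c l r] assms(3,4) unfolding crossing_edges_def by blast
  then have "a \<in> hatV l" "b \<in> hatV r" using hatTS_subset_hatV[of l] hatTS_subset_hatV[of r] by blast+
  then show ?thesis using assms(2) ab D by blast
qed

lemma hatV_Int_Union_crossing_edges:
  assumes "wf_dtree (Node c l r)" "t \<in> {l, r}" "M \<subseteq> hatE (Node c l r)"
  shows "hatV t \<inter> \<Union>{e \<in> M. \<not> e \<subseteq> hatV t} = hatV t \<inter> \<Union>(crossing_edges l r M)"
proof -
  have D: "hatV l \<inter> hatV r = {}" using assms(1) by simp
  have "e \<in> crossing_edges l r M" if "e \<in> M" "\<not> e \<subseteq> hatV t" "x \<in> e" "x \<in> hatV t" for e x
    using that assms(2) D unfolding crossing_edges_def by blast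
  then show ?thesis using assms(2) unfolding crossing_edges_def by blast
qed

lemma card_hatV_Int_Union_crossing_edges:
  assumes "wf_dtree (Node c l r)" "t \<in> {l, r}" "M \<subseteq> hatE (Node c l r)"
    and "\<forall>e\<in>M. \<forall>e'\<in>M. e \<noteq> e' \<longrightarrow> e \<inter> e' = {}"
  shows "card (hatV t \<inter> \<Union>(crossing_edges l r M)) = card (crossing_edges l r M)"
proof (rule card_Int_Union_disjoint)
  show "finite (crossing_edges l r M)"
    using assms(3) finite_hatE[of "Node c l r"] unfolding crossing_edges_def
    by (auto intro: finite_subset)
  show "e \<inter> e' = {}" if "e \<in> crossing_edges l r M" "e' \<in> crossing_edges l r M" "e \<noteq> e'" for e e'
    using that assms(4) unfolding crossing_edges_def by blast
  show "card (hatV t \<inter> e) = 1" if "e \<in> crossing_edges l r M" for e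
    using hatV_Int_crossing_edge[OF assms(1-3) that] by auto
qed

lemma k_feasible_child_restrict:
  assumes "wf_dtree (Node c l r)" "t \<in> {l, r}"
    and "hatV t - hatTS t \<subseteq> closed_nbh (hatE (Node c l r)) S"
    and "X \<subseteq> S \<inter> hatTS (Node c l r)" "perfect_matching (hatE (Node c l r)) (S - X) M"
  shows "k_feasible t (card (X \<inter> hatV t) + card (crossing_edges l r M)) (S \<inter> hatV t)"
proof -
  let ?u = "Node c l r"
  let ?Y = "hatV t \<inter> \<Union>(crossing_edges l r M)"
  have M: "M \<subseteq> hatE ?u" "\<forall>e\<in>M. \<forall>e'\<in>M. e \<noteq> e' \<longrightarrow> e \<inter> e' = {}" "\<Union>M = S - X"
    using assms(5) unfolding perfect_matching_def by auto
  have D: "hatV l \<inter> hatV r = {}" using assms(1) by simp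
  have XV: "X \<inter> hatV t \<subseteq> hatTS t"
    using assms(2,4) D hatTS_Node_subset[of c l r] hatTS_subset_hatV[of l] hatTS_subset_hatV[of r]
    by blast
  have Y: "?Y \<subseteq> hatTS t" "?Y \<subseteq> S - X"
  proof
    fix x assume "x \<in> ?Y"
    then obtain e where e: "e \<in> crossing_edges l r M" "x \<in> hatV t \<inter> e" by blast
    obtain a where "a \<in> hatTS t" "hatV t \<inter> e = {a}"
      using hatV_Int_crossing_edge[OF assms(1,2) M(1) e(1)] by blast
    then show "x \<in> hatTS t" using e(2) by auto
  next
    show "?Y \<subseteq> S - X" using M(3) unfolding crossing_edges_def by blast
  qed
  have "perfect_matching (hatE t) ((S - X) \<inter> hatV t - \<Union>{e \<in> M. \<not> e \<subseteq> hatV t}) {e \<in> M. e \<subseteq> hatV t}"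
    using assms(5) hatE_Node_inside_child[OF assms(1,2)] M(1)
    by (intro perfect_matching_restrict) blast+
  moreover have "(S - X) \<inter> hatV t - \<Union>{e \<in> M. \<not> e \<subseteq> hatV t} = S \<inter> hatV t - (X \<inter> hatV t \<union> ?Y)"
    using hatV_Int_Union_crossing_edges[OF assms(1,2) M(1)] by blast
  moreover have "card (X \<inter> hatV t \<union> ?Y) = card (X \<inter> hatV t) + card (crossing_edges l r M)"
  proof -
    have "finite (X \<inter> hatV t)" "finite ?Y" using finite_hatV[of t] by blast+
    moreover have "X \<inter> hatV t \<inter> ?Y = {}" using Y(2) by blast
    ultimately show ?thesis
      using card_hatV_Int_Union_crossing_edges[OF assms(1,2) M(1,2)] by (simp add: card_Un_disjoint)
  qed
  moreover have "hatV t - hatTS t \<subseteq> closed_nbh (hatE t) (S \<inter> hatV t)"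
    using closed_nbh_Node_child[OF assms(1,2)] assms(3) by blast
  moreover have "X \<inter> hatV t \<union> ?Y \<subseteq> S \<inter> hatV t \<inter> hatTS t" using XV Y assms(4) by blast
  ultimately show ?thesis by (metis k_feasibleI Int_lower2)
qed

lemma k_feasible_Attach_split:
  assumes "wf_dtree (Node Attach l r)" "k_feasible (Node Attach l r) k S"
  obtains i where "k_feasible l (k + i) (S \<inter> hatV l)" "k_feasible r i (S \<inter> hatV r)"
proof -
  let ?u = "Node Attach l r"
  obtain X M where dom: "hatV ?u - hatTS ?u \<subseteq> closed_nbh (hatE ?u) S"
    and X: "X \<subseteq> S \<inter> hatTS ?u" "card X = k" and pm: "perfect_matching (hatE ?u) (S - X) M"
    using assms(2) by (elim k_feasibleE)
  have D: "hatV l \<inter> hatV r = {}" using assms(1) by simp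
  have "X \<inter> hatV l = X" "X \<inter> hatV r = {}"
    using X(1) D hatTS_subset_hatV[of l] by auto
  moreover have "hatV t - hatTS t \<subseteq> closed_nbh (hatE ?u) S" if "t \<in> {l, r}" for t
    using that dom D hatTS_subset_hatV[of l] by auto
  ultimately have "k_feasible l (k + card (crossing_edges l r M)) (S \<inter> hatV l)"
    "k_feasible r (card (crossing_edges l r M)) (S \<inter> hatV r)"
    using k_feasible_child_restrict[OF assms(1) _ _ X(1) pm] X(2) by fastforce+
  then show ?thesis using that by blast
qed

lemma gamma_hat_le_card: "k_feasible u k S \<Longrightarrow> gamma_hat u k \<le> card S"
  unfolding gamma_hat_def by (rule Least_le) blast

lemma gamma_hat_attained:
  assumes "wf_dtree u" "k \<le> card (hatTS u)"
  obtains S where "k_feasible u k S" "card S = gamma_hat u k"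
proof -
  obtain S where "k_feasible u k S" using k_feasible_exists[OF assms] by blast
  then have "\<exists>n S. k_feasible u k S \<and> card S = n" by blast
  then have "\<exists>S. k_feasible u k S \<and> card S = gamma_hat u k"
    unfolding gamma_hat_def by (rule LeastI_ex)
  with that show ?thesis by blast
qed

lemma gamma_hat_image: "{gamma_hat u k | k. k \<le> card (hatTS u)} = gamma_hat u ` {..card (hatTS u)}"
  by auto

lemma min_hat_le_gamma_hat: "k \<le> card (hatTS u) \<Longrightarrow> min_hat u \<le> gamma_hat u k"
  unfolding min_hat_def gamma_hat_image by (rule Min_le) auto

lemma min_hat_le_card: "k_feasible u k S \<Longrightarrow> min_hat u \<le> card S"
  using min_hat_le_gamma_hat[OF k_feasible_le_card_hatTS] gamma_hat_le_card le_trans by blast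

lemma min_hat_attained: "\<exists>k \<le> card (hatTS u). gamma_hat u k = min_hat u"
proof -
  have "min_hat u \<in> gamma_hat u ` {..card (hatTS u)}"
    unfolding min_hat_def gamma_hat_image by (rule Min_in) auto
  then show ?thesis by force
qed

lemma alpha_beta_hat_attain_min_hat:
  "alpha_hat u \<le> card (hatTS u)" "gamma_hat u (alpha_hat u) = min_hat u"
  "beta_hat u \<le> card (hatTS u)" "gamma_hat u (beta_hat u) = min_hat u"
proof -
  let ?K = "{k. k \<le> card (hatTS u) \<and> gamma_hat u k = min_hat u}"
  have "finite ?K" "?K \<noteq> {}" using min_hat_attained[of u] by auto
  then have "Min ?K \<in> ?K" "Max ?K \<in> ?K" by (rule Min_in, rule Max_in)
  then show "alpha_hat u \<le> card (hatTS u)" "gamma_hat u (alpha_hat u) = min_hat u"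
    "beta_hat u \<le> card (hatTS u)" "gamma_hat u (beta_hat u) = min_hat u"
    unfolding alpha_hat_def beta_hat_def by auto
qed

lemma min_hat_Attach_le:
  assumes "wf_dtree (Node Attach l r)" "alpha_hat r \<le> beta_hat l" "0 < beta_hat l"
  shows "min_hat (Node Attach l r) \<le> min_hat l + min_hat r"
proof -
  have "wf_dtree l" "wf_dtree r" using assms(1) by auto
  obtain Sl where Sl: "k_feasible l (beta_hat l) Sl" "card Sl = min_hat l"
    using gamma_hat_attained[OF \<open>wf_dtree l\<close> alpha_beta_hat_attain_min_hat(3)]
      alpha_beta_hat_attain_min_hat(4) by metis
  obtain Sr where Sr: "k_feasible r (alpha_hat r) Sr" "card Sr = min_hat r"
    using gamma_hat_attained[OF \<open>wf_dtree r\<close> alpha_beta_hat_attain_min_hat(1)]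
      alpha_beta_hat_attain_min_hat(2) by metis
  have "k_feasible (Node Attach l r) (beta_hat l - alpha_hat r) (Sl \<union> Sr)"
    by (rule k_feasible_Attach_Un[OF assms(1) Sl(1) Sr(1) assms(2,3)])
  moreover have "card (Sl \<union> Sr) = min_hat l + min_hat r"
    using card_Un_children[OF assms(1)] Sl Sr by (metis k_feasibleE)
  ultimately show ?thesis by (metis min_hat_le_card)
qed

lemma min_hat_Attach_ge:
  assumes "wf_dtree (Node Attach l r)"
  shows "min_hat l + min_hat r \<le> min_hat (Node Attach l r)"
proof -
  obtain k S where S: "k_feasible (Node Attach l r) k S" "card S = min_hat (Node Attach l r)"
    using min_hat_attained gamma_hat_attained[OF assms] by metis
  then obtain i where "k_feasible l (k + i) (S \<inter> hatV l)" "k_feasible r i (S \<inter> hatV r)"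
    using k_feasible_Attach_split[OF assms] by blast
  moreover have "card S = card (S \<inter> hatV l) + card (S \<inter> hatV r)"
  proof -
    have "S \<subseteq> hatV (Node Attach l r)" using S(1) by (rule k_feasibleE)
    then have "S = (S \<inter> hatV l) \<union> (S \<inter> hatV r)" by auto
    then show ?thesis using card_Un_children[OF assms] by (metis Int_lower2)
  qed
  ultimately show ?thesis using min_hat_le_card S(2) by (metis add_mono)
qed

theorem lemma29:
  fixes V :: "'a set" and E :: "'a set set" and T vl vr :: "'a dtree"
  assumes "distance_hereditary V E"
    and "decomposition_tree T V E"
    and "Node Attach vl vr \<in> subtrees T"
    and "property_P vl" and "property_P vr"
    and "alpha_hat vr \<le> beta_hat vl"
    and "\<not> (alpha_hat vl = 0 \<and> beta_hat vr = 0)"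
    and "\<not> (alpha_hat vr = 0 \<and> beta_hat vl = 0)"
  shows "min_hat (Node Attach vl vr) = min_hat vl + min_hat vr"
proof -
  \<comment> \<open>Only beta vl \<ge> max 1 (alpha vr) is needed.\<close>
  have wf: "wf_dtree (Node Attach vl vr)"
    using assms(2,3) wf_dtree_subtrees unfolding decomposition_tree_def by blast
  have "0 < beta_hat vl" using assms(6,8) by auto
  then show ?thesis
    using min_hat_Attach_le[OF wf assms(6)] min_hat_Attach_ge[OF wf] by simp
qed

end
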